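(* Let $I\subseteq\mathbb K[x,y,z]$ be a good ideal with $\mu_1=x^{d_1},\mu_2=y^{d_2},\mu_3=z^{d_3}\in G(I)$. (i) If $I=\langle\mu_1,\mu_2,\mu_3\rangle$, then $I^2$ is good and $I^k$ is bad for every integer $k\ge3$. (ii) If $|G(I)|>3$, then $I^k$ is bad for every integer $k\ge2$.
   Context: Let $\mathbb K$ be a field, $R=\mathbb K[x_1,\dots,x_n]$ (here $n=3$), $\mathfrak m=\langle x_1,\dots,x_n\rangle$, $\mathbb N=\{0,1,2,\dots\}$. A monomial $x_1^{\alpha_1}\cdots x_n^{\alpha_n}$ is identified with the point $(\alpha_1,\dots,\alpha_n)\in\mathbb N^n$. For a monomial ideal $I$, $G(I)$ denotes its (unique) minimal monomial generating set. If $I$ is an $\mathfrak m$-primary monomial ideal, then for each $i$ there is a unique $d_i\ge1$ with $x_i^{d_i}\in G(I)$; write $\mu_i=x_i^{d_i}$. For $(a_1,\dots,a_n)\in\mathbb N^n$ the box associated to $I$ is $B_{a_1,\dots,a_n}=([a_1d_1,(a_1+1)d_1]\times\cdots\times[a_nd_n,(a_n+1)d_n])\cap\mathbb N^n$; a monomial belongs to a box if its exponent vector does. An $\mathfrak m$-primary monomial ideal $I$ is called good if for every integer $l\ge1$, every element of $G(I^l)$ belongs to some box $B_{a_1,\dots,a_n}$ with $a_1+\dots+a_n=l-1$; otherwise bad. (Goodness of $I^k$ is defined with respect to its own pure powers $x_i^{kd_i}\in G(I^k)$.) *)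

theory Defs
  imports Main
begin

text \<open>Monomials of K[x,y,z] are identified with exponent vectors in N^3 (triples).
A monomial ideal is identified with the set of exponent vectors of the monomials it
contains (an upward-closed subset of N^3); the field K plays no role.\<close>

type_synonym mon = "nat \<times> nat \<times> nat"

definition cmp :: "mon \<Rightarrow> nat \<Rightarrow> nat" where
  "cmp p i = (if i = 0 then fst p else if i = 1 then fst (snd p) else snd (snd p))"

definition pure :: "nat \<Rightarrow> nat \<Rightarrow> mon" where
  "pure i d = (if i = 0 then (d, 0, 0) else if i = 1 then (0, d, 0) else (0, 0, d))"

definition madd :: "mon \<Rightarrow> mon \<Rightarrow> mon" where
  "madd p q = (fst p + fst q, fst (snd p) + fst (snd q), snd (snd p) + snd (snd q))"

text \<open>divisibility of monomials = componentwise order\<close>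
definition mle :: "mon \<Rightarrow> mon \<Rightarrow> bool" where
  "mle p q \<longleftrightarrow> (\<forall>i<3. cmp p i \<le> cmp q i)"

definition monideal :: "mon set \<Rightarrow> bool" where
  "monideal M \<longleftrightarrow> (\<forall>p q. p \<in> M \<longrightarrow> mle p q \<longrightarrow> q \<in> M)"

definition mprimary :: "mon set \<Rightarrow> bool" where
  "mprimary M \<longleftrightarrow> monideal M \<and> (0, 0, 0) \<notin> M \<and> (\<forall>i<3. \<exists>d. pure i d \<in> M)"

definition gens :: "mon set \<Rightarrow> mon set" where
  "gens M = {g \<in> M. \<forall>h \<in> M. mle h g \<longrightarrow> h = g}"

fun mpow :: "mon set \<Rightarrow> nat \<Rightarrow> mon set" where
  "mpow M 0 = UNIV"
| "mpow M (Suc l) = {madd a b | a b. a \<in> M \<and> b \<in> mpow M l}"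

definition pdeg :: "mon set \<Rightarrow> nat \<Rightarrow> nat" where
  "pdeg M i = (LEAST d. pure i d \<in> M)"

definition in_box :: "mon set \<Rightarrow> mon \<Rightarrow> mon \<Rightarrow> bool" where
  "in_box M a p \<longleftrightarrow> (\<forall>i<3. cmp a i * pdeg M i \<le> cmp p i \<and> cmp p i \<le> (cmp a i + 1) * pdeg M i)"

definition good :: "mon set \<Rightarrow> bool" where
  "good M \<longleftrightarrow> (\<forall>l\<ge>1. \<forall>g \<in> gens (mpow M l).
      \<exists>a. cmp a 0 + cmp a 1 + cmp a 2 = l - 1 \<and> in_box M a g)"

end

theory Submission imports Defs begin

text \<open>Everything rests on testing goodness
of \<open>I^k\<close> at \<open>l = 2\<close>: a generator of \<open>(I^k)^2 = I^(2k)\<close> lies in a box \<open>B_a\<close> with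
\<open>a_1 + a_2 + a_3 = 1\<close>, so one of its exponents reaches \<open>k d_i\<close>. Hence \<open>I^k\<close> is bad as soon
as \<open>I^(2k)\<close> contains a monomial whose \<open>i\<close>-th exponent is below \<open>k d_i\<close> for every \<open>i\<close>.
For \<open>k \<ge> 3\<close> the monomial \<open>x^((k-1)d_1) y^((k-1)d_2) z^(2d_3)\<close> is such a witness, for any
\<open>m\<close>-primary \<open>I\<close>. If \<open>G(I)\<close> has a generator \<open>g\<close> that is not a pure power, each exponent
of \<open>g\<close> is below the corresponding \<open>d_i\<close>, and \<open>g x^((k-1)d_1) y^((k-1)d_2) z^(d_3)\<close> is a
witness for \<open>k \<ge> 2\<close>. Conversely, for \<open>I = \<langle>x^d_1, y^d_2, z^d_3\<rangle>\<close> the generators of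
\<open>(I^2)^l = I^(2l)\<close> are the monomials \<open>x^(i d_1) y^(j d_2) z^(m d_3)\<close> with \<open>i + j + m = 2l\<close>,
and halving \<open>i, j, m\<close> (rounding down, and lowering one quotient when all three are even)
puts each of them into a box of \<open>I^2\<close> with index sum \<open>l - 1\<close>.\<close>

lemma all_less_3: "(\<forall>i<(3::nat). P i) \<longleftrightarrow> P 0 \<and> P 1 \<and> P 2"
  by (auto simp: numeral_3_eq_3 less_Suc_eq numeral_2_eq_2)

lemma ex_less_3: "(\<exists>i<(3::nat). P i) \<longleftrightarrow> P 0 \<or> P 1 \<or> P 2"
  by (auto simp: numeral_3_eq_3 less_Suc_eq numeral_2_eq_2)

lemma mle_iff:
  "mle p q \<longleftrightarrow> fst p \<le> fst q \<and> fst (snd p) \<le> fst (snd q) \<and> snd (snd p) \<le> snd (snd q)"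
  by (simp add: mle_def all_less_3 cmp_def)

lemma madd_simps [simp]:
  "fst (madd p q) = fst p + fst q"
  "fst (snd (madd p q)) = fst (snd p) + fst (snd q)"
  "snd (snd (madd p q)) = snd (snd p) + snd (snd q)"
  by (simp_all add: madd_def)

lemma madd_assoc: "madd (madd a b) c = madd a (madd b c)"
  by (simp add: madd_def)

lemma mle_madd_left: "mle a (madd a b)"
  and mle_madd_right: "mle b (madd a b)"
  by (simp_all add: mle_iff)

lemma pure_add: "pure i (a + b) = madd (pure i a) (pure i b)"
  by (simp add: pure_def madd_def)

lemma pure_mle_iff: "i < 3 \<Longrightarrow> mle (pure i e) p \<longleftrightarrow> e \<le> cmp p i"
  by (auto simp: mle_iff pure_def cmp_def ex_less_3)

lemma madd_eq_pure:
  assumes "madd a b = pure i e" "i < 3"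
  shows "a = pure i (cmp a i) \<and> b = pure i (cmp b i) \<and> e = cmp a i + cmp b i"
  using assms by (auto simp: pure_def madd_def cmp_def prod_eq_iff split: if_splits)

lemma ex_gens_mle:
  assumes "p \<in> S"
  shows "\<exists>g\<in>gens S. mle g p"
proof -
  define deg where "deg q = fst q + fst (snd q) + snd (snd q)" for q :: mon
  obtain g where g: "g \<in> S" "mle g p" and least: "\<And>h. h \<in> S \<Longrightarrow> mle h p \<Longrightarrow> deg g \<le> deg h"
    using ex_has_least_nat[of "\<lambda>h. h \<in> S \<and> mle h p" p deg] assms by (auto simp: mle_iff)
  have "g \<in> gens S" unfolding gens_def
  proof (safe intro!: g(1))
    fix h assume "h \<in> S" "mle h g"
    moreover from this g(2) have "mle h p" by (auto simp: mle_iff)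
    ultimately show "h = g" using least by (fastforce simp: mle_iff deg_def prod_eq_iff)
  qed
  with g(2) show ?thesis by blast
qed

lemma monidealD: "monideal M \<Longrightarrow> p \<in> M \<Longrightarrow> mle p q \<Longrightarrow> q \<in> M"
  unfolding monideal_def by blast

lemma monideal_mpow: "monideal M \<Longrightarrow> monideal (mpow M n)"
proof (induction n)
  case 0
  then show ?case by (simp add: monideal_def)
next
  case (Suc n)
  show ?case unfolding monideal_def
  proof (intro allI impI)
    fix p q assume "p \<in> mpow M (Suc n)" "mle p q"
    then obtain a b where ab: "p = madd a b" "a \<in> M" "b \<in> mpow M n" by auto
    define a' where "a' = (fst a + (fst q - fst p), fst (snd a) + (fst (snd q) - fst (snd p)),
      snd (snd a) + (snd (snd q) - snd (snd p)))"
    have "a' \<in> M" using monidealD[OF Suc.prems ab(2)] by (simp add: a'_def mle_iff)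
    moreover have "q = madd a' b"
      using \<open>mle p q\<close> ab(1) by (auto simp: a'_def mle_iff madd_def prod_eq_iff)
    ultimately show "q \<in> mpow M (Suc n)" using ab(3) by (simp only: mpow.simps) blast
  qed
qed

lemma mpow_one: "monideal M \<Longrightarrow> mpow M 1 = M"
proof (intro equalityI subsetI)
  fix p assume "monideal M" "p \<in> mpow M 1"
  then show "p \<in> M" by (auto intro: monidealD mle_madd_left)
next
  fix p assume "p \<in> M"
  moreover have "p = madd p (0, 0, 0)" by (simp add: madd_def)
  ultimately show "p \<in> mpow M 1" by (simp only: One_nat_def mpow.simps) blast
qed

lemma mpow_add:
  assumes "monideal M" "1 \<le> m"
  shows "mpow M (m + n) = {madd x y | x y. x \<in> mpow M m \<and> y \<in> mpow M n}"
  using assms(2)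
proof (induction m rule: dec_induct)
  case base
  then show ?case using mpow_one[OF assms(1)] by simp
next
  case (step m)
  have "mpow M (Suc m + n) = {madd a c | a c. a \<in> M \<and> c \<in> mpow M (m + n)}"
    by simp
  also have "\<dots> = {madd (madd a x) y | a x y. a \<in> M \<and> x \<in> mpow M m \<and> y \<in> mpow M n}"
    unfolding step.IH madd_assoc by blast
  also have "\<dots> = {madd x y | x y. x \<in> mpow M (Suc m) \<and> y \<in> mpow M n}"
    by (simp only: mpow.simps) blast
  finally show ?case .
qed

lemma mpow_mpow: "monideal M \<Longrightarrow> 1 \<le> a \<Longrightarrow> mpow (mpow M a) b = mpow M (a * b)"
  by (induction b) (simp_all add: mpow_add)

lemma madd_mem_mpow:
  assumes "monideal M" "a \<in> mpow M m" "b \<in> mpow M n"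
  shows "madd a b \<in> mpow M (m + n)"
proof (cases "m = 0")
  case True
  then show ?thesis
    using monidealD[OF monideal_mpow[OF assms(1)] assms(3) mle_madd_right] by simp
next
  case False
  moreover have "madd a b \<in> {madd x y | x y. x \<in> mpow M m \<and> y \<in> mpow M n}"
    using assms(2,3) by blast
  ultimately show ?thesis using mpow_add[OF assms(1), of m n] by simp
qed

lemma pure_mult_mem_mpow: "pure i d \<in> M \<Longrightarrow> pure i (k * d) \<in> mpow M k"
  by (induction k) (simp_all only: mult_Suc pure_add mpow.simps, blast+)

lemma pure_mem_mpow_imp_ge:
  "pure i e \<in> mpow M k \<Longrightarrow> i < 3 \<Longrightarrow> k * pdeg M i \<le> e"
proof (induction k arbitrary: e)
  case 0
  then show ?case by simp
next
  case (Suc k)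
  then obtain a b where ab: "pure i e = madd a b" "a \<in> M" "b \<in> mpow M k" by auto
  with madd_eq_pure[OF ab(1)[symmetric] Suc.prems(2)]
  have "pdeg M i \<le> cmp a i" "k * pdeg M i \<le> cmp b i" "e = cmp a i + cmp b i"
    using Suc.IH Suc.prems(2) unfolding pdeg_def by (metis Least_le)+
  then show ?case by simp
qed

lemma pure_pdeg_mem: "mprimary M \<Longrightarrow> i < 3 \<Longrightarrow> pure i (pdeg M i) \<in> M"
  unfolding mprimary_def pdeg_def by (metis LeastI_ex)

lemma pdeg_mpow: "mprimary M \<Longrightarrow> i < 3 \<Longrightarrow> pdeg (mpow M k) i = k * pdeg M i"
  unfolding pdeg_def[of "mpow M k"]
  by (rule Least_equality)
     (auto intro: pure_mult_mem_mpow pure_pdeg_mem pure_mem_mpow_imp_ge)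

lemma pdeg_pos:
  assumes "mprimary M" "i < 3"
  shows "0 < pdeg M i"
proof (rule gr0I)
  assume "pdeg M i = 0"
  then have "(0, 0, 0) \<in> M" using pure_pdeg_mem[OF assms] by (simp add: pure_def split: if_splits)
  with assms(1) show False by (simp add: mprimary_def)
qed

lemma gens_cmp_lt_pdeg:
  assumes "mprimary M" "g \<in> gens M" "i < 3" "g \<noteq> pure i (pdeg M i)"
  shows "cmp g i < pdeg M i"
proof (rule ccontr)
  assume "\<not> cmp g i < pdeg M i"
  then have "mle (pure i (pdeg M i)) g" using pure_mle_iff[OF assms(3)] by simp
  then show False using assms pure_pdeg_mem[OF assms(1,3)] unfolding gens_def by blast
qed

lemma not_good_mpow_if_below_box_corner:
  assumes M: "mprimary M" and k: "1 \<le> k" and p: "p \<in> mpow M (2 * k)"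
    and below: "\<forall>i<3. cmp p i < k * pdeg M i"
  shows "\<not> good (mpow M k)"
proof
  assume good: "good (mpow M k)"
  obtain g where g: "g \<in> gens (mpow M (2 * k))" "mle g p"
    using ex_gens_mle[OF p] by blast
  moreover have "mpow (mpow M k) 2 = mpow M (2 * k)"
    using mpow_mpow[OF _ k, of M 2] M by (simp add: mprimary_def mult.commute)
  ultimately obtain a where a: "cmp a 0 + cmp a 1 + cmp a 2 = 1" "in_box (mpow M k) a g"
    using good[unfolded good_def, rule_format, of 2 g] by auto
  have "\<exists>i<3. 1 \<le> cmp a i" unfolding ex_less_3 using a(1) by linarith
  then obtain i where i: "i < 3" "1 \<le> cmp a i" by blast
  have "k * pdeg M i \<le> cmp a i * pdeg (mpow M k) i"
    using pdeg_mpow[OF M i(1)] i(2) by simp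
  also have "\<dots> \<le> cmp g i" using a(2) i(1) unfolding in_box_def by blast
  also have "\<dots> \<le> cmp p i" using g(2) i(1) unfolding mle_def by blast
  finally show False using below i(1) by auto
qed

definition pure_prod :: "mon set \<Rightarrow> nat \<Rightarrow> nat \<Rightarrow> nat \<Rightarrow> mon" where
  "pure_prod M i j l = (i * pdeg M 0, j * pdeg M 1, l * pdeg M 2)"

lemma pure_prod_mem_mpow:
  assumes "mprimary M"
  shows "pure_prod M i j l \<in> mpow M (i + j + l)"
proof -
  have M: "monideal M" using assms by (simp add: mprimary_def)
  have "pure_prod M i j l =
      madd (pure 0 (i * pdeg M 0)) (madd (pure 1 (j * pdeg M 1)) (pure 2 (l * pdeg M 2)))"
    by (simp add: pure_prod_def pure_def madd_def)
  also have "\<dots> \<in> mpow M (i + (j + l))"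
    using pure_mult_mem_mpow[OF pure_pdeg_mem[OF assms]]
    by (intro madd_mem_mpow[OF M]) simp_all
  finally show ?thesis by (simp add: add.assoc)
qed

lemma mem_mpow_imp_pure_prod_mle:
  assumes G: "gens M = {pure 0 (pdeg M 0), pure 1 (pdeg M 1), pure 2 (pdeg M 2)}"
  shows "p \<in> mpow M n \<Longrightarrow> \<exists>i j l. i + j + l = n \<and> mle (pure_prod M i j l) p"
proof (induction n arbitrary: p)
  case 0
  then show ?case by (auto simp: pure_prod_def mle_iff)
next
  case (Suc n)
  then obtain a b where ab: "p = madd a b" "a \<in> M" "b \<in> mpow M n" by auto
  obtain i j l where ijl: "i + j + l = n" "mle (pure_prod M i j l) b" using Suc.IH ab(3) by blast
  obtain g where "g \<in> gens M" "mle g a" using ex_gens_mle[OF ab(2)] by blast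
  with G have "pdeg M 0 \<le> fst a \<or> pdeg M 1 \<le> fst (snd a) \<or> pdeg M 2 \<le> snd (snd a)"
    by (auto simp: mle_iff pure_def)
  then show ?case
  proof (elim disjE)
    assume "pdeg M 0 \<le> fst a"
    then show ?case using ab(1) ijl
      by (intro exI[of _ "Suc i"] exI[of _ j] exI[of _ l]) (auto simp: mle_iff pure_prod_def)
  next
    assume "pdeg M 1 \<le> fst (snd a)"
    then show ?case using ab(1) ijl
      by (intro exI[of _ i] exI[of _ "Suc j"] exI[of _ l]) (auto simp: mle_iff pure_prod_def)
  next
    assume "pdeg M 2 \<le> snd (snd a)"
    then show ?case using ab(1) ijl
      by (intro exI[of _ i] exI[of _ j] exI[of _ "Suc l"]) (auto simp: mle_iff pure_prod_def)
  qed
qed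

lemma gens_mpow_pure_gens:
  assumes "mprimary M" "gens M = {pure 0 (pdeg M 0), pure 1 (pdeg M 1), pure 2 (pdeg M 2)}"
    and g: "g \<in> gens (mpow M n)"
  shows "\<exists>i j l. i + j + l = n \<and> g = pure_prod M i j l"
proof -
  have "g \<in> mpow M n" using g by (simp add: gens_def)
  then obtain i j l where ijl: "i + j + l = n" "mle (pure_prod M i j l) g"
    using mem_mpow_imp_pure_prod_mle[OF assms(2)] by blast
  moreover have "pure_prod M i j l \<in> mpow M n"
    using pure_prod_mem_mpow[OF assms(1)] ijl(1) by blast
  ultimately show ?thesis using g unfolding gens_def by blast
qed

lemma halves_in_boxes:
  fixes i j m l :: nat
  assumes sum: "i + j + m = 2 * l" and l: "1 \<le> l"
  shows "\<exists>a b c. a + b + c = l - 1 \<and> 2 * a \<le> i \<and> i \<le> 2 * a + 2 \<and>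
    2 * b \<le> j \<and> j \<le> 2 * b + 2 \<and> 2 * c \<le> m \<and> m \<le> 2 * c + 2"
proof -
  define qi qj qm where "qi = i div 2" "qj = j div 2" "qm = m div 2"
  define ri rj rm where "ri = i mod 2" "rj = j mod 2" "rm = m mod 2"
  have q: "i = 2 * qi + ri" "j = 2 * qj + rj" "m = 2 * qm + rm" "ri \<le> 1" "rj \<le> 1" "rm \<le> 1"
    by (simp_all add: qi_qj_qm_def ri_rj_rm_def)
  have "ri + rj + rm = 2 * (l - (qi + qj + qm))" using sum q by simp
  moreover have "l - (qi + qj + qm) = 0 \<or> l - (qi + qj + qm) = 1"
    using calculation q(4-6) by linarith
  ultimately have "ri + rj + rm = 0 \<or> ri + rj + rm = 2" by auto
  then show ?thesis
  proof
    assume "ri + rj + rm = 0"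
    then have "qi + qj + qm = l" using sum q by linarith
    then consider "1 \<le> qi" | "1 \<le> qj" | "1 \<le> qm" using l by linarith
    then show ?thesis
    proof cases
      case 1
      then show ?thesis using sum q \<open>qi + qj + qm = l\<close>
        by (intro exI[of _ "qi - 1"] exI[of _ qj] exI[of _ qm]) linarith
    next
      case 2
      then show ?thesis using sum q \<open>qi + qj + qm = l\<close>
        by (intro exI[of _ qi] exI[of _ "qj - 1"] exI[of _ qm]) linarith
    next
      case 3
      then show ?thesis using sum q \<open>qi + qj + qm = l\<close>
        by (intro exI[of _ qi] exI[of _ qj] exI[of _ "qm - 1"]) linarith
    qed
  next
    assume "ri + rj + rm = 2"
    then show ?thesis using sum q by (intro exI[of _ qi] exI[of _ qj] exI[of _ qm]) linarith
  qed
qed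

lemma good_mpow_two:
  assumes M: "mprimary M" and G: "gens M = {pure 0 (pdeg M 0), pure 1 (pdeg M 1), pure 2 (pdeg M 2)}"
  shows "good (mpow M 2)"
  unfolding good_def
proof (intro allI impI ballI)
  fix l g assume l: "1 \<le> l" and "g \<in> gens (mpow (mpow M 2) l)"
  then have "g \<in> gens (mpow M (2 * l))"
    using M mpow_mpow[of M 2 l] by (simp add: mprimary_def)
  then obtain i j m where "i + j + m = 2 * l" and g: "g = pure_prod M i j m"
    using gens_mpow_pure_gens[OF M G] by blast
  then obtain a b c where abc: "a + b + c = l - 1" "2 * a \<le> i" "i \<le> 2 * a + 2"
    "2 * b \<le> j" "j \<le> 2 * b + 2" "2 * c \<le> m" "m \<le> 2 * c + 2"
    using halves_in_boxes l by blast
  have scale: "x * (2 * d) \<le> y * d \<and> y * d \<le> (x + 1) * (2 * d)"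
    if "2 * x \<le> y" "y \<le> 2 * x + 2" for x y d :: nat
    using that mult_le_mono1[of "2 * x" y d] mult_le_mono1[of y "2 * x + 2" d]
    by (simp add: algebra_simps)
  show "\<exists>a. cmp a 0 + cmp a 1 + cmp a 2 = l - 1 \<and> in_box (mpow M 2) a g"
    using abc g scale[of a i] scale[of b j] scale[of c m]
    by (intro exI[of _ "(a, b, c)"])
       (simp add: in_box_def all_less_3 cmp_def pure_prod_def pdeg_mpow[OF M])
qed

lemma pred_mult_add_lt: "1 \<le> (k::nat) \<Longrightarrow> x < d \<Longrightarrow> (k - 1) * d + x < k * d"
  by (cases k) auto

lemma not_good_mpow_ge_3:
  assumes M: "mprimary M" and k: "3 \<le> k"
  shows "\<not> good (mpow M k)"
proof (rule not_good_mpow_if_below_box_corner[OF M])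
  have "k - 1 + (k - 1) + 2 = 2 * k" using k by simp
  then show "pure_prod M (k - 1) (k - 1) 2 \<in> mpow M (2 * k)"
    using pure_prod_mem_mpow[OF M, of "k - 1" "k - 1" 2] by (simp only:)
  have "2 * pdeg M 2 < k * pdeg M 2" using pdeg_pos[OF M, of 2] k by simp
  then show "\<forall>i<3. cmp (pure_prod M (k - 1) (k - 1) 2) i < k * pdeg M i"
    using pred_mult_add_lt[of k 0] pdeg_pos[OF M] k
    by (simp add: all_less_3 cmp_def pure_prod_def)
qed (use k in simp)

lemma not_good_mpow_if_mixed_gen:
  assumes M: "mprimary M" and g: "g \<in> gens M" "\<forall>i<3. g \<noteq> pure i (pdeg M i)"
    and k: "2 \<le> k"
  shows "\<not> good (mpow M k)"
proof (rule not_good_mpow_if_below_box_corner[OF M])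
  define p where "p = madd g (pure_prod M (k - 1) (k - 1) 1)"
  have "g \<in> mpow M 1" using g(1) M mpow_one[of M] unfolding gens_def mprimary_def by blast
  then have "p \<in> mpow M (1 + (k - 1 + (k - 1) + 1))"
    unfolding p_def using M madd_mem_mpow pure_prod_mem_mpow unfolding mprimary_def by blast
  moreover have "1 + (k - 1 + (k - 1) + 1) = 2 * k" using k by simp
  ultimately show "p \<in> mpow M (2 * k)" by (simp only:)
  have lt: "cmp g i < pdeg M i" if "i < 3" for i
    using gens_cmp_lt_pdeg[OF M g(1) that] g(2) that by blast
  have "pdeg M 2 + cmp g 2 < 2 * pdeg M 2" using lt[of 2] by simp
  also have "\<dots> \<le> k * pdeg M 2" using k by simp
  finally show "\<forall>i<3. cmp p i < k * pdeg M i"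
    using pred_mult_add_lt[of k "cmp g 0"] pred_mult_add_lt[of k "cmp g 1"] lt[of 0] lt[of 1] k
    by (simp add: all_less_3 cmp_def p_def pure_prod_def add.commute)
qed (use k in simp)

theorem mainTheorem15:
  fixes M :: "mon set"
  assumes "mprimary M" and "good M"
  shows "(gens M = {pure 0 (pdeg M 0), pure 1 (pdeg M 1), pure 2 (pdeg M 2)} \<longrightarrow>
            good (mpow M 2) \<and> (\<forall>k\<ge>3. \<not> good (mpow M k)))
       \<and> (card (gens M) > 3 \<longrightarrow> (\<forall>k\<ge>2. \<not> good (mpow M k)))"
proof (intro conjI impI allI)
  assume "gens M = {pure 0 (pdeg M 0), pure 1 (pdeg M 1), pure 2 (pdeg M 2)}"
  then show "good (mpow M 2)" "\<And>k. 3 \<le> k \<Longrightarrow> \<not> good (mpow M k)"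
    using good_mpow_two not_good_mpow_ge_3 assms(1) by blast+
next
  fix k :: nat
  assume "card (gens M) > 3" "2 \<le> k"
  moreover have "card {pure 0 (pdeg M 0), pure 1 (pdeg M 1), pure 2 (pdeg M 2)} \<le> 3"
    by (simp add: card_insert_if)
  ultimately have "\<not> gens M \<subseteq> {pure 0 (pdeg M 0), pure 1 (pdeg M 1), pure 2 (pdeg M 2)}"
    using card_mono[of "{pure 0 (pdeg M 0), pure 1 (pdeg M 1), pure 2 (pdeg M 2)}" "gens M"] by auto
  then obtain g where "g \<in> gens M" "\<forall>i<3. g \<noteq> pure i (pdeg M i)"
    unfolding all_less_3 by blast
  then show "\<not> good (mpow M k)"
    using not_good_mpow_if_mixed_gen assms(1) \<open>2 \<le> k\<close> by blast
qed

end
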